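(* Consider the cooperative planning problem (CPP) of $M$ interconnected microgrids described in the context: $$\max \prod_{i\in\mathcal{M}} \Big[ C_i^{NonCoop} - \big( v_i + \theta\, \mathbb{E}_{\omega}C_i^{O}(\boldsymbol q_i^\omega,\boldsymbol r_i^\omega,\boldsymbol d_i^\omega,\boldsymbol x^\omega)\big)\Big]$$ subject to the supply constraint (S2), storage constraints (B1)–(B3), demand constraints (D1)–(D2), and the cooperative constraints (C1)–(C4), over the variables $\{z_i, G_i^s, G_i^w, v_i, \boldsymbol e_i^\omega, \boldsymbol q_i^\omega, \boldsymbol r_i^\omega, \boldsymbol d_i^\omega, \boldsymbol s_i^\omega, \boldsymbol x_n^\omega : i\in\mathcal M, n\in\mathcal N_i,\omega\in\Omega\}$. Then Problem CPP can be solved in two steps: Step 1: solve the joint investment and operation problem (IOP) $$\min \sum_{i\in\mathcal M} C_i^{Overall}(z_i,G_i^s,G_i^w,\boldsymbol q_i^\omega,\boldsymbol r_i^\omega,\boldsymbol d_i^\omega,\boldsymbol x^\omega)$$ subject to (S2), (B1)–(B3), (D1)–(D2), (C2) and (C3), over the variables $\{z_i, G_i^s, G_i^w, \boldsymbol e_i^\omega, \boldsymbol q_i^\omega, \boldsymbol r_i^\omega, \boldsymbol d_i^\omega, \boldsymbol s_i^\omega, \boldsymbol x_n^\omega\}$; denote by $\{z_i^\star,G_i^{s,\star},G_i^{w,\star}\}$ the optimal planning, by $\{\boldsymbol e_i^{\omega,\star},\boldsymbol q_i^{\omega,\star},\boldsymbol r_i^{\omega,\star},\boldsymbol d_i^{\omega,\star},\boldsymbol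 s_i^{\omega,\star},\boldsymbol x_n^{\omega,\star}\}$ the optimal power schedule, and by $C_i^{Oper,\star} = \theta\,\mathbb{E}_{\omega}C_i^{O}(\boldsymbol q_i^{\omega,\star},\boldsymbol r_i^{\omega,\star},\boldsymbol d_i^{\omega,\star},\boldsymbol x^{\omega,\star})$ the resulting expected operational cost of microgrid $i$ over the planning horizon. Step 2: given these optimal planning and operation decisions, solve the cost sharing problem (CSP) $$\max \prod_{i\in\mathcal M}\Big[C_i^{NonCoop} - \big(C_i^{Oper,\star} + v_i\big)\Big]$$ subject to $\sum_{i\in\mathcal M} v_i = \sum_{i\in\mathcal M} C_i^I(z_i^\star,G_i^{s,\star},G_i^{w,\star})$ and $v_i + C_i^{Oper,\star}\le C_i^{NonCoop}$ for all $i\in\mathcal M$, over the variables $\{v_i : i\in\mathcal M\}$. That is, the optimal planning/operation decisions from Step 1 together with the optimal cost shares from Step 2 constitute an optimal solution of Problem CPP.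
   Context: Setting. $\mathcal M=\{1,\dots,M\}$ is a set of interconnected microgrids; $\mathcal N_i$ is the set of users of microgrid $i$; $\mathcal T=\{1,\dots,T\}$ are the time slots of a day; $\Omega$ is a finite set of renewable generation scenarios with probabilities $\pi_\omega>0$, $\sum_{\omega\in\Omega}\pi_\omega=1$, and $\mathbb E_\omega f^\omega := \sum_{\omega\in\Omega}\pi_\omega f^\omega$. The planning horizon has $D$ days with daily discount rate $R_d$, and $\theta=\sum_{d=1}^D (1+R_d)^{-d}$. Decision variables for microgrid $i$: $z_i\in\{0,1\}$ (whether to install renewables), solar capacity $G_i^s\in[0,G_i^{s,\max}]$, wind capacity $G_i^w\in[0,G_i^{w,\max}]$; for each $\omega\in\Omega,t\in\mathcal T$: renewable supply $g_i^{\omega,t}$, grid procurement $q_i^{\omega,t}$, storage level $s_i^{\omega,t}$, charge $r_i^{\omega,t}$, discharge $d_i^{\omega,t}$, elastic load $x_n^{\omega,t}$ of each user $n\in\mathcal N_i$, power $e_{i,j}^{\omega,t}\ge 0$ supplied from microgrid $j$ to microgrid $i$; and the cost share $v_i$. Bold symbols denote the corresponding vectors over $t$ (and $j$); $\boldsymbol x^\omega$ denotes the vectors $\boldsymbol x_n^\omega$ of the users $n\in\mathcal N_i$. Parameters: fixed investment cost $F_i$, unit capacity costs $c_i^s,c_i^w$; per-unit-capacity solar and wind output $\eta_i^{s,\omega,t},\eta_i^{w,\omega,t}\ge0$; $Q_i^{\max}$; storage capacity $E_i$, depth-of-discharge $DoD_i$, $S_i^{\min}=E_i(1-DoD_i)$,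 $S_i^{\max}=E_i$, given initial level $s_i^{\omega,0}$; $r_i^{\max},d_i^{\max}>0$; efficiencies $\eta_i^r,\eta_i^d\in(0,1]$; distribution efficiencies $\eta_{i,j}$; inelastic loads $b_i^t$; user daily energy $L_n$, bounds $l_n^{t,\min},l_n^{t,\max}$, preferred consumption $y_n^t$; grid prices $p^t$; storage cost coefficient $\alpha_i$; discomfort coefficient $\beta_n$. Costs: investment cost $C_i^I(z_i,G_i^s,G_i^w)=z_i(F_i+c_i^sG_i^s+c_i^wG_i^w)$; daily operational cost in scenario $\omega$: $C_i^O(\boldsymbol q_i^\omega,\boldsymbol r_i^\omega,\boldsymbol d_i^\omega,\boldsymbol x^\omega)=\sum_{t\in\mathcal T}\big[p^tq_i^{\omega,t}+\alpha_i(r_i^{\omega,t}+d_i^{\omega,t})+\sum_{n\in\mathcal N_i}\beta_n(x_n^{\omega,t}-y_n^t)^2\big]$; overall cost $C_i^{Overall}=C_i^I(z_i,G_i^s,G_i^w)+\theta\,\mathbb E_\omega C_i^O(\boldsymbol q_i^\omega,\boldsymbol r_i^\omega,\boldsymbol d_i^\omega,\boldsymbol x^\omega)$. Constraints (for all $i\in\mathcal M$, $t\in\mathcal T$, $\omega\in\Omega$, $n\in\mathcal N_i$): (S1) $0\le g_i^{\omega,t}\le z_i(G_i^s\eta_i^{s,\omega,t}+G_i^w\eta_i^{w,\omega,t})$; (S2) $0\le q_i^{\omega,t}\le Q_i^{\max}$; (B1) $0\le r_i^{\omega,t}\le r_i^{\max}$; (B2) $0\le d_i^{\omega,t}\le d_i^{\max}$;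 (B3) $s_i^{\omega,t}=\min\{\max\{S_i^{\min}, s_i^{\omega,t-1}+\eta_i^r r_i^{\omega,t}-d_i^{\omega,t}/\eta_i^d\},S_i^{\max}\}$, with $s_i^{\omega,T}=s_i^{\omega,0}$; (D1) $\sum_{t\in\mathcal T}x_n^{\omega,t}=L_n$; (D2) $l_n^{t,\min}\le x_n^{\omega,t}\le l_n^{t,\max}$; (L) $g_i^{\omega,t}+q_i^{\omega,t}+d_i^{\omega,t}=r_i^{\omega,t}+b_i^t+\sum_{n\in\mathcal N_i}x_n^{\omega,t}$; (C1) $\sum_{i\in\mathcal M}v_i=\sum_{i\in\mathcal M}C_i^I(z_i,G_i^s,G_i^w)$; (C2) $\sum_{j\in\mathcal M}e_{j,i}^{\omega,t}\le z_i(G_i^s\eta_i^{s,\omega,t}+G_i^w\eta_i^{w,\omega,t})$; (C3) $\sum_{j\in\mathcal M}\eta_{i,j}e_{i,j}^{\omega,t}+q_i^{\omega,t}+d_i^{\omega,t}=r_i^{\omega,t}+b_i^t+\sum_{n\in\mathcal N_i}x_n^{\omega,t}$; (C4) $v_i+\theta\,\mathbb E_\omega C_i^O(\boldsymbol q_i^\omega,\boldsymbol r_i^\omega,\boldsymbol d_i^\omega,\boldsymbol x^\omega)\le C_i^{NonCoop}$. Noncooperative benchmark: $C_i^{NonCoop}$ is the optimal value of the problem of minimizing $C_i^{Overall}$ subject to (S1), (S2), (B1)–(B3), (D1), (D2), (L) over microgrid $i$'s own variables $z_i,G_i^s,G_i^w,\boldsymbol g_i^\omega,\boldsymbol q_i^\omega,\boldsymbol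 r_i^\omega,\boldsymbol d_i^\omega,\boldsymbol s_i^\omega,\boldsymbol x_n^\omega$. *)

theory Defs
  imports Complex_Main
begin

text \<open>Microgrids are the elements of a
finite type 'm (so M = UNIV), users have type 'u, scenarios have type 'w.
Time slots are 1..T; storage levels are indexed by 0..T.\<close>

record ('m, 'u, 'w) mg_params =
  Users   :: "'m \<Rightarrow> 'u set"
  Tn      :: nat
  Scen    :: "'w set"
  prob    :: "'w \<Rightarrow> real"
  Days    :: nat
  Rd      :: real
  Fc      :: "'m \<Rightarrow> real"
  cs      :: "'m \<Rightarrow> real"
  cw      :: "'m \<Rightarrow> real"
  Gsmax   :: "'m \<Rightarrow> real"
  Gwmax   :: "'m \<Rightarrow> real"
  eta_s   :: "'m \<Rightarrow> 'w \<Rightarrow> nat \<Rightarrow> real"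
  eta_w   :: "'m \<Rightarrow> 'w \<Rightarrow> nat \<Rightarrow> real"
  Qmax    :: "'m \<Rightarrow> real"
  Ecap    :: "'m \<Rightarrow> real"
  DoD     :: "'m \<Rightarrow> real"
  s0      :: "'m \<Rightarrow> 'w \<Rightarrow> real"
  rmax    :: "'m \<Rightarrow> real"
  dmax    :: "'m \<Rightarrow> real"
  eta_r   :: "'m \<Rightarrow> real"
  eta_d   :: "'m \<Rightarrow> real"
  eta_dist :: "'m \<Rightarrow> 'm \<Rightarrow> real"
  bload   :: "'m \<Rightarrow> nat \<Rightarrow> real"
  Lday    :: "'u \<Rightarrow> real"
  lmin    :: "'u \<Rightarrow> nat \<Rightarrow> real"
  lmax    :: "'u \<Rightarrow> nat \<Rightarrow> real"
  ypref   :: "'u \<Rightarrow> nat \<Rightarrow> real"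
  price   :: "nat \<Rightarrow> real"
  alpha   :: "'m \<Rightarrow> real"
  beta    :: "'u \<Rightarrow> real"

text \<open>Decision variables.  eX w t i j is e_{i,j}^{w,t}, the power supplied
from microgrid j to microgrid i.\<close>

record ('m, 'u, 'w) mg_dec =
  zI  :: "'m \<Rightarrow> bool"
  Gs  :: "'m \<Rightarrow> real"
  Gw  :: "'m \<Rightarrow> real"
  vS  :: "'m \<Rightarrow> real"
  gR  :: "'m \<Rightarrow> 'w \<Rightarrow> nat \<Rightarrow> real"
  qG  :: "'m \<Rightarrow> 'w \<Rightarrow> nat \<Rightarrow> real"
  sB  :: "'m \<Rightarrow> 'w \<Rightarrow> nat \<Rightarrow> real"
  rC  :: "'m \<Rightarrow> 'w \<Rightarrow> nat \<Rightarrow> real"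
  dD  :: "'m \<Rightarrow> 'w \<Rightarrow> nat \<Rightarrow> real"
  xL  :: "'u \<Rightarrow> 'w \<Rightarrow> nat \<Rightarrow> real"
  eX  :: "'w \<Rightarrow> nat \<Rightarrow> 'm \<Rightarrow> 'm \<Rightarrow> real"

definition theta :: "('m, 'u, 'w, 'z) mg_params_scheme \<Rightarrow> real" where
  "theta P = (\<Sum>dd = 1..Days P. 1 / (1 + Rd P) ^ dd)"

definition Smin :: "('m, 'u, 'w, 'z) mg_params_scheme \<Rightarrow> 'm \<Rightarrow> real" where
  "Smin P i = Ecap P i * (1 - DoD P i)"

definition Smax :: "('m, 'u, 'w, 'z) mg_params_scheme \<Rightarrow> 'm \<Rightarrow> real" where
  "Smax P i = Ecap P i"

definition Expect :: "('m, 'u, 'w, 'z) mg_params_scheme \<Rightarrow> ('w \<Rightarrow> real) \<Rightarrow> real" where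
  "Expect P f = (\<Sum>w\<in>Scen P. prob P w * f w)"

definition CI :: "('m, 'u, 'w, 'z) mg_params_scheme \<Rightarrow> ('m, 'u, 'w, 'y) mg_dec_scheme \<Rightarrow> 'm \<Rightarrow> real" where
  "CI P X i = of_bool (zI X i) * (Fc P i + cs P i * Gs X i + cw P i * Gw X i)"

definition CO :: "('m, 'u, 'w, 'z) mg_params_scheme \<Rightarrow> ('m, 'u, 'w, 'y) mg_dec_scheme \<Rightarrow> 'm \<Rightarrow> 'w \<Rightarrow> real" where
  "CO P X i w = (\<Sum>t = 1..Tn P.
      price P t * qG X i w t + alpha P i * (rC X i w t + dD X i w t)
      + (\<Sum>n\<in>Users P i. beta P n * (xL X n w t - ypref P n t)^2))"

definition Coper :: "('m, 'u, 'w, 'z) mg_params_scheme \<Rightarrow> ('m, 'u, 'w, 'y) mg_dec_scheme \<Rightarrow> 'm \<Rightarrow> real" where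
  "Coper P X i = theta P * Expect P (CO P X i)"

definition Coverall :: "('m, 'u, 'w, 'z) mg_params_scheme \<Rightarrow> ('m, 'u, 'w, 'y) mg_dec_scheme \<Rightarrow> 'm \<Rightarrow> real" where
  "Coverall P X i = CI P X i + Coper P X i"

definition RenOut :: "('m, 'u, 'w, 'z) mg_params_scheme \<Rightarrow> ('m, 'u, 'w, 'y) mg_dec_scheme \<Rightarrow> 'm \<Rightarrow> 'w \<Rightarrow> nat \<Rightarrow> real" where
  "RenOut P X i w t = of_bool (zI X i) * (Gs X i * eta_s P i w t + Gw X i * eta_w P i w t)"

definition cap_ok :: "('m, 'u, 'w, 'z) mg_params_scheme \<Rightarrow> ('m, 'u, 'w, 'y) mg_dec_scheme \<Rightarrow> 'm \<Rightarrow> bool" where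
  "cap_ok P X i \<longleftrightarrow> 0 \<le> Gs X i \<and> Gs X i \<le> Gsmax P i \<and> 0 \<le> Gw X i \<and> Gw X i \<le> Gwmax P i"

text \<open>(S2), (B1)-(B3), (D1)-(D2) for microgrid i.\<close>
definition local_ok :: "('m, 'u, 'w, 'z) mg_params_scheme \<Rightarrow> ('m, 'u, 'w, 'y) mg_dec_scheme \<Rightarrow> 'm \<Rightarrow> bool" where
  "local_ok P X i \<longleftrightarrow>
     (\<forall>w\<in>Scen P.
        (\<forall>t\<in>{1..Tn P}.
           0 \<le> qG X i w t \<and> qG X i w t \<le> Qmax P i
         \<and> 0 \<le> rC X i w t \<and> rC X i w t \<le> rmax P i
         \<and> 0 \<le> dD X i w t \<and> dD X i w t \<le> dmax P i
         \<and> sB X i w t = min (max (Smin P i)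
               (sB X i w (t - 1) + eta_r P i * rC X i w t - dD X i w t / eta_d P i)) (Smax P i))
      \<and> sB X i w 0 = s0 P i w
      \<and> sB X i w (Tn P) = s0 P i w
      \<and> (\<forall>n\<in>Users P i.
           (\<Sum>t = 1..Tn P. xL X n w t) = Lday P n
         \<and> (\<forall>t\<in>{1..Tn P}. lmin P n t \<le> xL X n w t \<and> xL X n w t \<le> lmax P n t)))"

text \<open>Noncooperative problem of microgrid i: (S1), (S2), (B1)-(B3), (D1), (D2), (L).\<close>
definition nc_feasible :: "('m, 'u, 'w, 'z) mg_params_scheme \<Rightarrow> ('m, 'u, 'w) mg_dec \<Rightarrow> 'm \<Rightarrow> bool" where
  "nc_feasible P X i \<longleftrightarrow> cap_ok P X i \<and> local_ok P X i \<and>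
     (\<forall>w\<in>Scen P. \<forall>t\<in>{1..Tn P}.
        0 \<le> gR X i w t \<and> gR X i w t \<le> RenOut P X i w t
      \<and> gR X i w t + qG X i w t + dD X i w t
          = rC X i w t + bload P i t + (\<Sum>n\<in>Users P i. xL X n w t))"

text \<open>The
objective and constraints of microgrid i only involve its own variables, so
minimising over whole decision records is minimising over i's own variables.\<close>
definition CNonCoop :: "('m, 'u, 'w, 'z) mg_params_scheme \<Rightarrow> 'm \<Rightarrow> real" where
  "CNonCoop P i = Inf {Coverall P X i | X. nc_feasible P X i}"

text \<open>Cooperative constraints (C2), (C3) and nonnegativity of the e variables.\<close>
definition coop_flow_ok :: "('m::finite, 'u, 'w, 'z) mg_params_scheme \<Rightarrow> ('m, 'u, 'w, 'y) mg_dec_scheme \<Rightarrow> bool" where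
  "coop_flow_ok P X \<longleftrightarrow>
     (\<forall>w\<in>Scen P. \<forall>t\<in>{1..Tn P}. \<forall>i.
        (\<forall>j. 0 \<le> eX X w t i j)
      \<and> (\<Sum>j\<in>UNIV. eX X w t j i) \<le> RenOut P X i w t
      \<and> (\<Sum>j\<in>UNIV. eta_dist P i j * eX X w t i j) + qG X i w t + dD X i w t
          = rC X i w t + bload P i t + (\<Sum>n\<in>Users P i. xL X n w t))"

definition iop_feasible :: "('m::finite, 'u, 'w, 'z) mg_params_scheme \<Rightarrow> ('m, 'u, 'w) mg_dec \<Rightarrow> bool" where
  "iop_feasible P X \<longleftrightarrow> (\<forall>i. cap_ok P X i \<and> local_ok P X i) \<and> coop_flow_ok P X"

definition iop_optimal :: "('m::finite, 'u, 'w, 'z) mg_params_scheme \<Rightarrow> ('m, 'u, 'w) mg_dec \<Rightarrow> bool" where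
  "iop_optimal P X \<longleftrightarrow> iop_feasible P X \<and>
     (\<forall>Y. iop_feasible P Y \<longrightarrow> (\<Sum>i\<in>UNIV. Coverall P X i) \<le> (\<Sum>i\<in>UNIV. Coverall P Y i))"

text \<open>Feasible set of CPP: (S2), (B1)-(B3), (D1)-(D2), (C1)-(C4).\<close>
definition cpp_feasible :: "('m::finite, 'u, 'w, 'z) mg_params_scheme \<Rightarrow> ('m, 'u, 'w) mg_dec \<Rightarrow> bool" where
  "cpp_feasible P X \<longleftrightarrow> iop_feasible P X
     \<and> (\<Sum>i\<in>UNIV. vS X i) = (\<Sum>i\<in>UNIV. CI P X i)
     \<and> (\<forall>i. vS X i + Coper P X i \<le> CNonCoop P i)"

definition cpp_obj :: "('m::finite, 'u, 'w, 'z) mg_params_scheme \<Rightarrow> ('m, 'u, 'w) mg_dec \<Rightarrow> real" where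
  "cpp_obj P X = (\<Prod>i\<in>UNIV. CNonCoop P i - (vS X i + Coper P X i))"

definition cpp_optimal :: "('m::finite, 'u, 'w, 'z) mg_params_scheme \<Rightarrow> ('m, 'u, 'w) mg_dec \<Rightarrow> bool" where
  "cpp_optimal P X \<longleftrightarrow> cpp_feasible P X \<and> (\<forall>Y. cpp_feasible P Y \<longrightarrow> cpp_obj P Y \<le> cpp_obj P X)"

definition csp_feasible :: "('m::finite, 'u, 'w, 'z) mg_params_scheme \<Rightarrow> ('m, 'u, 'w) mg_dec \<Rightarrow> ('m \<Rightarrow> real) \<Rightarrow> bool" where
  "csp_feasible P Xs v \<longleftrightarrow> (\<Sum>i\<in>UNIV. v i) = (\<Sum>i\<in>UNIV. CI P Xs i)
     \<and> (\<forall>i. v i + Coper P Xs i \<le> CNonCoop P i)"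

definition csp_obj :: "('m::finite, 'u, 'w, 'z) mg_params_scheme \<Rightarrow> ('m, 'u, 'w) mg_dec \<Rightarrow> ('m \<Rightarrow> real) \<Rightarrow> real" where
  "csp_obj P Xs v = (\<Prod>i\<in>UNIV. CNonCoop P i - (Coper P Xs i + v i))"

definition csp_optimal :: "('m::finite, 'u, 'w, 'z) mg_params_scheme \<Rightarrow> ('m, 'u, 'w) mg_dec \<Rightarrow> ('m \<Rightarrow> real) \<Rightarrow> bool" where
  "csp_optimal P Xs v \<longleftrightarrow> csp_feasible P Xs v \<and>
     (\<forall>v'. csp_feasible P Xs v' \<longrightarrow> csp_obj P Xs v' \<le> csp_obj P Xs v)"

definition model_ok :: "('m::finite, 'u, 'w, 'z) mg_params_scheme \<Rightarrow> bool" where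
  "model_ok P \<longleftrightarrow> finite (Scen P) \<and> (\<forall>w\<in>Scen P. prob P w > 0) \<and> (\<Sum>w\<in>Scen P. prob P w) = 1
     \<and> (\<forall>i. finite (Users P i)) \<and> (\<forall>i j. i \<noteq> j \<longrightarrow> Users P i \<inter> Users P j = {})
     \<and> (\<forall>i w t. 0 \<le> eta_s P i w t \<and> 0 \<le> eta_w P i w t)
     \<and> (\<forall>i. 0 < rmax P i \<and> 0 < dmax P i
           \<and> 0 < eta_r P i \<and> eta_r P i \<le> 1 \<and> 0 < eta_d P i \<and> eta_d P i \<le> 1)"

end

theory Submission
  imports Defs
begin

text \<open>Any CPP-feasible point Y pays in total at least the IOP optimum, because its
schedule is IOP-feasible.  Keeping each microgrid's payment of Y but moving it onto
the IOP schedule, and returning the total saving in equal parts, gives CSP-feasible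
cost shares under which every microgrid pays at most what it pays under Y.  Hence
the Nash product of Y is bounded by a CSP objective value, and so by the CSP
optimum, which is attained by the IOP schedule together with the optimal shares.\<close>

lemma sum_minus_uniform_excess:
  fixes x :: "'a \<Rightarrow> real"
  assumes "finite A" "A \<noteq> {}"
  shows "(\<Sum>i\<in>A. x i - (sum x A - S) / card A) = S"
  using assms by (simp add: sum_subtractf)

lemma
  fixes X :: "('m::finite, 'u, 'w) mg_dec"
  shows Coper_update_vS: "Coper P (X\<lparr>vS := v\<rparr>) = Coper P X"
    and CI_update_vS: "CI P (X\<lparr>vS := v\<rparr>) = CI P X"
    and iop_feasible_update_vS: "iop_feasible P (X\<lparr>vS := v\<rparr>) = iop_feasible P X"
  by (simp_all add: fun_eq_iff Coper_def Expect_def CO_def CI_def iop_feasible_def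
      cap_ok_def local_ok_def coop_flow_ok_def RenOut_def)

lemma cpp_feasible_update_vS:
  "cpp_feasible P (X\<lparr>vS := v\<rparr>) \<longleftrightarrow> iop_feasible P X \<and> csp_feasible P X v"
  by (simp add: cpp_feasible_def csp_feasible_def Coper_update_vS CI_update_vS
      iop_feasible_update_vS)

lemma cpp_obj_update_vS: "cpp_obj P (X\<lparr>vS := v\<rparr>) = csp_obj P X v"
  by (simp add: cpp_obj_def csp_obj_def Coper_update_vS add.commute)

lemma cpp_obj_le_csp_obj_of_iop_optimal:
  fixes Xs :: "('m::finite, 'u, 'w) mg_dec"
  assumes Xs: "iop_optimal P Xs" and Y: "cpp_feasible P Y"
  obtains v where "csp_feasible P Xs v" and "cpp_obj P Y \<le> csp_obj P Xs v"
proof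
  have shares: "(\<Sum>i\<in>UNIV. vS Y i) = (\<Sum>i\<in>UNIV. CI P Y i)"
    and payment_le: "\<And>i. vS Y i + Coper P Y i \<le> CNonCoop P i"
    and "iop_feasible P Y"
    using Y by (auto simp: cpp_feasible_def)
  then have total_le: "(\<Sum>i\<in>UNIV. Coverall P Xs i) \<le> (\<Sum>i\<in>UNIV. Coverall P Y i)"
    using Xs by (simp add: iop_optimal_def)
  define pay where "pay i = vS Y i + Coper P Y i - Coper P Xs i" for i
  define refund where "refund = (sum pay UNIV - (\<Sum>i\<in>UNIV. CI P Xs i)) / card (UNIV :: 'm set)"
  define v where "v i = pay i - refund" for i
  have "sum pay UNIV - (\<Sum>i\<in>UNIV. CI P Xs i)
        = (\<Sum>i\<in>UNIV. Coverall P Y i) - (\<Sum>i\<in>UNIV. Coverall P Xs i)"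
    using shares by (simp add: pay_def Coverall_def sum.distrib sum_subtractf)
  then have refund_nonneg: "0 \<le> refund"
    using total_le by (simp add: refund_def)
  have "sum v UNIV = (\<Sum>i\<in>UNIV. CI P Xs i)"
    unfolding v_def refund_def by (rule sum_minus_uniform_excess) simp_all
  moreover have share_le: "v i + Coper P Xs i \<le> vS Y i + Coper P Y i" for i
    using refund_nonneg by (simp add: v_def pay_def)
  ultimately show "csp_feasible P Xs v"
    using payment_le order_trans by (fastforce simp: csp_feasible_def)
  show "cpp_obj P Y \<le> csp_obj P Xs v"
    unfolding cpp_obj_def csp_obj_def
    by (rule prod_mono) (use payment_le share_le in \<open>smt (verit)\<close>)
qed

theorem theorem1:
  fixes P :: "('m::finite, 'u, 'w) mg_params"
    and Xs :: "('m, 'u, 'w) mg_dec"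
    and vs :: "'m \<Rightarrow> real"
  assumes "model_ok P"
    and "iop_optimal P Xs"
    and "csp_optimal P Xs vs"
  shows "cpp_optimal P (Xs\<lparr>vS := vs\<rparr>)"
proof -
  have "cpp_feasible P (Xs\<lparr>vS := vs\<rparr>)"
    using assms(2,3) by (simp add: cpp_feasible_update_vS iop_optimal_def csp_optimal_def)
  moreover have "cpp_obj P Y \<le> cpp_obj P (Xs\<lparr>vS := vs\<rparr>)" if Y: "cpp_feasible P Y" for Y
  proof -
    obtain v where "csp_feasible P Xs v" and "cpp_obj P Y \<le> csp_obj P Xs v"
      using cpp_obj_le_csp_obj_of_iop_optimal[OF assms(2) Y] .
    then show ?thesis
      using assms(3) by (auto simp: csp_optimal_def cpp_obj_update_vS)
  qed
  ultimately show ?thesis by (simp add: cpp_optimal_def)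
qed

end
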